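(* The identities (A5) $x\wedge(y\wedge z)\approx (y\wedge x)\wedge z$, (J5') $x\approx (x'\wedge y)'\wedge(x'\wedge y')'$ form a 2-base for the variety $\mathbb{BA}$ of Boolean algebras (in the language $\langle\wedge,{}'\rangle$).
   Context: Algebras are of type $\langle \wedge, {}'\rangle$ with $\wedge$ binary and ${}'$ unary. The variety $\mathbb{BA}$ of Boolean algebras in this language consists of the algebras $\langle B,\wedge,{}'\rangle$ obtained from Boolean algebras by keeping only meet and complement (equivalently, the variety generated by the two-element Boolean algebra with meet and complement). A base for a variety is an independent set of identities (no identity in the set follows from the others) that defines the variety; an $n$-base is a base with exactly $n$ identities. *)

theory Defs
  imports Main
begin

definition identity_A5 :: "('a \<Rightarrow> 'a \<Rightarrow> 'a) \<Rightarrow> ('a \<Rightarrow> 'a) \<Rightarrow> bool" where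
  "identity_A5 m c \<longleftrightarrow> (\<forall>x y z. m x (m y z) = m (m y x) z)"

definition identity_J5' :: "('a \<Rightarrow> 'a \<Rightarrow> 'a) \<Rightarrow> ('a \<Rightarrow> 'a) \<Rightarrow> bool" where
  "identity_J5' m c \<longleftrightarrow> (\<forall>x y. x = m (c (m (c x) y)) (c (m (c x) (c y))))"

definition in_BA :: "('a \<Rightarrow> 'a \<Rightarrow> 'a) \<Rightarrow> ('a \<Rightarrow> 'a) \<Rightarrow> bool" where
  "in_BA m c \<longleftrightarrow> (\<exists>j zero one. abstract_boolean_algebra m j c zero one)"

end

theory Submission
  imports Defs
begin

(* The crux is commutativity, which
   follows from A5 and J5' by a short equational derivation; with it, A5 yields associativity.
   In a commutative semigroup J5' is the meet form -(-x \<sqinter> y) \<sqinter> -(-x \<sqinter> -y) = x of Huntington's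
   axiom, and Huntington's argument shows that such an algebra is Boolean with the de Morgan join
   x \<squnion> y = -(-x \<sqinter> -y): the axiom forces -(-x) = x and a constant x \<sqinter> -x, hence a bounded
   semilattice, and distributivity follows because x \<sqinter> y = 0 implies x \<sqinter> -y = x. *)

locale huntington = abel_semigroup m for m :: "'a \<Rightarrow> 'a \<Rightarrow> 'a" (infixl \<open>\<^bold>\<sqinter>\<close> 70) +
  fixes c :: "'a \<Rightarrow> 'a"  (\<open>\<^bold>- _\<close> [80] 80)
  assumes huntington: "\<^bold>-(\<^bold>- x \<^bold>\<sqinter> y) \<^bold>\<sqinter> \<^bold>-(\<^bold>- x \<^bold>\<sqinter> \<^bold>- y) = x"
begin

lemma compl_meet_double_compl: "\<^bold>- x \<^bold>\<sqinter> \<^bold>- \<^bold>- x = x \<^bold>\<sqinter> \<^bold>- x"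
proof -
  have swap: "x \<^bold>\<sqinter> \<^bold>-(\<^bold>- \<^bold>- y \<^bold>\<sqinter> \<^bold>- x) = x \<^bold>\<sqinter> \<^bold>-(\<^bold>- x \<^bold>\<sqinter> y)" for x y
    by (metis huntington commute assoc)
  have "x \<^bold>\<sqinter> (\<^bold>-(\<^bold>- x \<^bold>\<sqinter> y) \<^bold>\<sqinter> \<^bold>-(\<^bold>- \<^bold>- y \<^bold>\<sqinter> x)) = x \<^bold>\<sqinter> \<^bold>- y" for x y
  proof -
    have "x \<^bold>\<sqinter> (\<^bold>-(\<^bold>- x \<^bold>\<sqinter> y) \<^bold>\<sqinter> \<^bold>-(\<^bold>- \<^bold>- y \<^bold>\<sqinter> x))
        = \<^bold>-(\<^bold>- \<^bold>- y \<^bold>\<sqinter> x) \<^bold>\<sqinter> (x \<^bold>\<sqinter> \<^bold>-(\<^bold>- \<^bold>- y \<^bold>\<sqinter> \<^bold>- x))"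
      by (metis swap commute left_commute)
    also have "\<dots> = x \<^bold>\<sqinter> \<^bold>- y"
      using huntington[of "\<^bold>- y" x] by (metis left_commute)
    finally show ?thesis .
  qed
  then show ?thesis
    by (metis huntington commute)
qed

lemma double_compl: "\<^bold>- \<^bold>- x = x"
  by (metis huntington commute compl_meet_double_compl)

lemma compl_split: "\<^bold>-(x \<^bold>\<sqinter> y) \<^bold>\<sqinter> \<^bold>-(x \<^bold>\<sqinter> \<^bold>- y) = \<^bold>- x"
  by (metis huntington double_compl)

lemma meet_compl_eq: "x \<^bold>\<sqinter> \<^bold>- x = y \<^bold>\<sqinter> \<^bold>- y"
proof -
  have "x \<^bold>\<sqinter> \<^bold>-(\<^bold>- y \<^bold>\<sqinter> x) = y \<^bold>\<sqinter> \<^bold>-(\<^bold>- x \<^bold>\<sqinter> y)"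
    by (metis compl_split double_compl commute left_commute)
  then show ?thesis
    by (metis compl_split commute assoc left_commute)
qed

definition zero (\<open>\<^bold>0\<close>) where "\<^bold>0 = undefined \<^bold>\<sqinter> \<^bold>- undefined"

definition one (\<open>\<^bold>1\<close>) where "\<^bold>1 = \<^bold>- \<^bold>0"

definition join (infixl \<open>\<^bold>\<squnion>\<close> 65) where "x \<^bold>\<squnion> y = \<^bold>-(\<^bold>- x \<^bold>\<sqinter> \<^bold>- y)"

lemma meet_compl: "x \<^bold>\<sqinter> \<^bold>- x = \<^bold>0"
  unfolding zero_def by (rule meet_compl_eq)

lemma meet_zero: "x \<^bold>\<sqinter> \<^bold>0 = \<^bold>0"
  by (metis meet_compl compl_split assoc)

lemma meet_idem: "x \<^bold>\<sqinter> x = x"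
  by (metis compl_split double_compl left_commute meet_compl)

lemma meet_one: "x \<^bold>\<sqinter> \<^bold>1 = x"
  unfolding one_def by (metis meet_compl compl_split double_compl assoc meet_idem)

sublocale semilattice "(\<^bold>\<sqinter>)"
  by unfold_locales (rule meet_idem)

lemma join_zero: "x \<^bold>\<squnion> \<^bold>0 = x"
  unfolding join_def by (metis meet_one one_def double_compl)

lemma compl_join: "\<^bold>-(x \<^bold>\<squnion> y) = \<^bold>- x \<^bold>\<sqinter> \<^bold>- y"
  unfolding join_def by (rule double_compl)

lemma compl_meet: "\<^bold>-(x \<^bold>\<sqinter> y) = \<^bold>- x \<^bold>\<squnion> \<^bold>- y"
  unfolding join_def by (simp add: double_compl)

lemma join_commute: "x \<^bold>\<squnion> y = y \<^bold>\<squnion> x"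
  unfolding join_def by (simp add: commute)

lemma meet_join_split: "(x \<^bold>\<squnion> y) \<^bold>\<sqinter> (x \<^bold>\<squnion> \<^bold>- y) = x"
  unfolding join_def using huntington by (simp add: double_compl commute)

lemma join_meet_split: "(x \<^bold>\<sqinter> y) \<^bold>\<squnion> (x \<^bold>\<sqinter> \<^bold>- y) = x"
  unfolding join_def by (metis compl_split double_compl)

lemma meet_join_absorb: "x \<^bold>\<sqinter> (x \<^bold>\<squnion> y) = x"
  by (metis meet_join_split assoc commute meet_idem)

lemma meet_compl_if_disjoint: "x \<^bold>\<sqinter> y = \<^bold>0 \<Longrightarrow> x \<^bold>\<sqinter> \<^bold>- y = x"
  using join_meet_split[of x y] by (metis join_commute join_zero)

lemma meet_compl_meet: "x \<^bold>\<sqinter> \<^bold>-(x \<^bold>\<sqinter> y) = x \<^bold>\<sqinter> \<^bold>- y"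
proof -
  have "x \<^bold>\<sqinter> \<^bold>-(x \<^bold>\<sqinter> y) \<^bold>\<sqinter> y = \<^bold>0"
    by (metis meet_compl assoc commute)
  then have "x \<^bold>\<sqinter> \<^bold>-(x \<^bold>\<sqinter> y) = x \<^bold>\<sqinter> (\<^bold>-(x \<^bold>\<sqinter> y) \<^bold>\<sqinter> \<^bold>- y)"
    by (metis meet_compl_if_disjoint assoc)
  also have "\<^bold>-(x \<^bold>\<sqinter> y) \<^bold>\<sqinter> \<^bold>- y = \<^bold>- y"
    by (metis compl_meet join_commute meet_join_absorb commute)
  finally show ?thesis .
qed

lemma join_least:
  assumes "x \<^bold>\<sqinter> z = x" and "y \<^bold>\<sqinter> z = y"
  shows "(x \<^bold>\<squnion> y) \<^bold>\<sqinter> z = x \<^bold>\<squnion> y"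
proof -
  have "\<^bold>- z \<^bold>\<sqinter> \<^bold>- x = \<^bold>- z" and "\<^bold>- z \<^bold>\<sqinter> \<^bold>- y = \<^bold>- z"
    using assms by (metis meet_compl_if_disjoint meet_compl assoc commute)+
  then have "\<^bold>- z \<^bold>\<sqinter> \<^bold>-(x \<^bold>\<squnion> y) = \<^bold>- z"
    by (metis compl_join assoc)
  then have "(x \<^bold>\<squnion> y) \<^bold>\<sqinter> \<^bold>- z = \<^bold>0"
    by (metis meet_compl meet_zero assoc commute)
  then show ?thesis
    using meet_compl_if_disjoint double_compl by metis
qed

lemma meet_join_distrib: "x \<^bold>\<sqinter> (y \<^bold>\<squnion> z) = (x \<^bold>\<sqinter> y) \<^bold>\<squnion> (x \<^bold>\<sqinter> z)"
proof -
  let ?w = "x \<^bold>\<sqinter> (y \<^bold>\<squnion> z)" and ?u = "(x \<^bold>\<sqinter> y) \<^bold>\<squnion> (x \<^bold>\<sqinter> z)"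
  have "?u \<^bold>\<sqinter> ?w = ?u"
    by (rule join_least) (metis meet_join_absorb join_commute assoc left_commute meet_idem)+
  moreover have "?w \<^bold>\<sqinter> \<^bold>- ?u = \<^bold>0"
  proof -
    have "?w \<^bold>\<sqinter> \<^bold>- ?u = x \<^bold>\<sqinter> \<^bold>-(x \<^bold>\<sqinter> y) \<^bold>\<sqinter> (x \<^bold>\<sqinter> \<^bold>-(x \<^bold>\<sqinter> z)) \<^bold>\<sqinter> (y \<^bold>\<squnion> z)"
      by (simp add: compl_join ac_simps)
    also have "\<dots> = (\<^bold>- y \<^bold>\<sqinter> \<^bold>- z) \<^bold>\<sqinter> \<^bold>-(\<^bold>- y \<^bold>\<sqinter> \<^bold>- z) \<^bold>\<sqinter> x"
      by (simp add: meet_compl_meet join_def ac_simps)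
    finally show ?thesis
      by (simp add: meet_compl meet_zero commute left_commute)
  qed
  then have "?w \<^bold>\<sqinter> ?u = ?w"
    using meet_compl_if_disjoint double_compl by metis
  ultimately show ?thesis
    by (simp add: commute)
qed

lemma join_meet_distrib: "x \<^bold>\<squnion> (y \<^bold>\<sqinter> z) = (x \<^bold>\<squnion> y) \<^bold>\<sqinter> (x \<^bold>\<squnion> z)"
  using meet_join_distrib[of "\<^bold>- x" "\<^bold>- y" "\<^bold>- z"]
  by (metis compl_meet compl_join double_compl)

lemma boolean_algebra: "abstract_boolean_algebra (\<^bold>\<sqinter>) (\<^bold>\<squnion>) c \<^bold>0 \<^bold>1"
proof unfold_locales
  fix x y z
  show "x \<^bold>\<squnion> y \<^bold>\<squnion> z = x \<^bold>\<squnion> (y \<^bold>\<squnion> z)"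
    by (simp add: join_def double_compl assoc)
  show "x \<^bold>\<squnion> y = y \<^bold>\<squnion> x"
    by (rule join_commute)
  show "x \<^bold>\<sqinter> (y \<^bold>\<squnion> z) = x \<^bold>\<sqinter> y \<^bold>\<squnion> x \<^bold>\<sqinter> z"
    by (rule meet_join_distrib)
  show "x \<^bold>\<squnion> y \<^bold>\<sqinter> z = (x \<^bold>\<squnion> y) \<^bold>\<sqinter> (x \<^bold>\<squnion> z)"
    by (rule join_meet_distrib)
  show "x \<^bold>\<sqinter> \<^bold>1 = x"
    by (rule meet_one)
  show "x \<^bold>\<squnion> \<^bold>0 = x"
    by (rule join_zero)
  show "x \<^bold>\<sqinter> \<^bold>- x = \<^bold>0"
    by (rule meet_compl)
  show "x \<^bold>\<squnion> \<^bold>- x = \<^bold>1"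
    by (simp add: join_def one_def double_compl meet_compl commute)
qed

end

locale A5_J5' =
  fixes m :: "'a \<Rightarrow> 'a \<Rightarrow> 'a" (infixl \<open>\<^bold>\<sqinter>\<close> 70)
    and c :: "'a \<Rightarrow> 'a"  (\<open>\<^bold>- _\<close> [80] 80)
  assumes A5: "x \<^bold>\<sqinter> (y \<^bold>\<sqinter> z) = y \<^bold>\<sqinter> x \<^bold>\<sqinter> z"
    and J5': "x = \<^bold>-(\<^bold>- x \<^bold>\<sqinter> y) \<^bold>\<sqinter> \<^bold>-(\<^bold>- x \<^bold>\<sqinter> \<^bold>- y)"
begin

lemma J5'_left: "\<^bold>-(\<^bold>- x \<^bold>\<sqinter> \<^bold>- y) \<^bold>\<sqinter> (\<^bold>-(\<^bold>- x \<^bold>\<sqinter> y) \<^bold>\<sqinter> z) = x \<^bold>\<sqinter> z"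
  by (metis A5 J5')

lemma meet_left_swap: "w \<^bold>\<sqinter> (x \<^bold>\<sqinter> (y \<^bold>\<sqinter> z)) = w \<^bold>\<sqinter> (y \<^bold>\<sqinter> (x \<^bold>\<sqinter> z))"
  by (metis A5)

lemma compl_meet_twice: "\<^bold>- x \<^bold>\<sqinter> (\<^bold>- x \<^bold>\<sqinter> y) = y \<^bold>\<sqinter> (\<^bold>- x \<^bold>\<sqinter> \<^bold>- x)"
  by (metis A5 J5' J5'_left)

lemma compl_meet_rotate: "\<^bold>- x \<^bold>\<sqinter> (y \<^bold>\<sqinter> (\<^bold>- x \<^bold>\<sqinter> z)) = z \<^bold>\<sqinter> (\<^bold>- x \<^bold>\<sqinter> (y \<^bold>\<sqinter> \<^bold>- x))"
  by (metis A5 compl_meet_twice meet_left_swap)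

lemma J5'_factor_swap: "\<^bold>-(\<^bold>- x \<^bold>\<sqinter> y) \<^bold>\<sqinter> (z \<^bold>\<sqinter> x) = x \<^bold>\<sqinter> (z \<^bold>\<sqinter> \<^bold>-(\<^bold>- x \<^bold>\<sqinter> y))"
  by (metis J5' J5'_left compl_meet_rotate)

lemma compl_meet_reduce:
  "\<^bold>- x \<^bold>\<sqinter> (\<^bold>-(\<^bold>-(\<^bold>- x \<^bold>\<sqinter> y) \<^bold>\<sqinter> (\<^bold>- x \<^bold>\<sqinter> \<^bold>- y)) \<^bold>\<sqinter> z) = y \<^bold>\<sqinter> (\<^bold>- x \<^bold>\<sqinter> z)"
  by (metis A5 J5')

lemma compl_factor_swap:
  "\<^bold>-(x \<^bold>\<sqinter> (\<^bold>- y \<^bold>\<sqinter> z)) \<^bold>\<sqinter> (w \<^bold>\<sqinter> y) = y \<^bold>\<sqinter> (w \<^bold>\<sqinter> \<^bold>-(x \<^bold>\<sqinter> (\<^bold>- y \<^bold>\<sqinter> z)))"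
  by (metis J5'_factor_swap compl_meet_reduce)

lemma meet_commute: "x \<^bold>\<sqinter> y = y \<^bold>\<sqinter> x"
  by (metis J5' J5'_left compl_factor_swap)

sublocale huntington "(\<^bold>\<sqinter>)" c
proof unfold_locales
  fix x y z
  show "x \<^bold>\<sqinter> y \<^bold>\<sqinter> z = x \<^bold>\<sqinter> (y \<^bold>\<sqinter> z)"
    by (metis A5 meet_commute)
  show "x \<^bold>\<sqinter> y = y \<^bold>\<sqinter> x"
    by (rule meet_commute)
  show "\<^bold>-(\<^bold>- x \<^bold>\<sqinter> y) \<^bold>\<sqinter> \<^bold>-(\<^bold>- x \<^bold>\<sqinter> \<^bold>- y) = x"
    by (rule J5'[symmetric])
qed

end

lemma (in abstract_boolean_algebra) identity_A5: "identity_A5 (\<^bold>\<sqinter>) compl"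
  unfolding identity_A5_def by (simp add: conj.assoc conj.commute conj.left_commute)

lemma (in abstract_boolean_algebra) identity_J5': "identity_J5' (\<^bold>\<sqinter>) compl"
  unfolding identity_J5'_def by (simp flip: disj_conj_distrib)

lemma A5_J5'_iff_in_BA: "identity_A5 m c \<and> identity_J5' m c \<longleftrightarrow> in_BA m c"
proof
  assume "identity_A5 m c \<and> identity_J5' m c"
  then interpret A5_J5' m c
    by unfold_locales (auto simp: identity_A5_def identity_J5'_def)
  show "in_BA m c"
    unfolding in_BA_def using boolean_algebra by blast
next
  assume "in_BA m c"
  then obtain j zero one where ba: "abstract_boolean_algebra m j c zero one"
    unfolding in_BA_def by blast
  show "identity_A5 m c \<and> identity_J5' m c"
    using abstract_boolean_algebra.identity_A5[OF ba] abstract_boolean_algebra.identity_J5'[OF ba]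
    by blast
qed

lemma A5_not_implies_J5':
  "identity_A5 (\<lambda>x y. 0 :: nat) (\<lambda>x. 0) \<and> \<not> identity_J5' (\<lambda>x y. 0 :: nat) (\<lambda>x. 0)"
  by (auto simp: identity_A5_def identity_J5'_def)

lemma J5'_not_implies_A5:
  "identity_J5' (\<lambda>x y. x :: nat) (\<lambda>x. x) \<and> \<not> identity_A5 (\<lambda>x y. x :: nat) (\<lambda>x. x)"
  by (auto simp: identity_A5_def identity_J5'_def)

theorem theorem6p1:
  shows "(\<forall>(m :: 'a \<Rightarrow> 'a \<Rightarrow> 'a) c. (identity_A5 m c \<and> identity_J5' m c) \<longleftrightarrow> in_BA m c)
    \<and> (\<exists>(m :: nat \<Rightarrow> nat \<Rightarrow> nat) c. identity_A5 m c \<and> \<not> identity_J5' m c)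
    \<and> (\<exists>(m :: nat \<Rightarrow> nat \<Rightarrow> nat) c. identity_J5' m c \<and> \<not> identity_A5 m c)"
  using A5_J5'_iff_in_BA A5_not_implies_J5' J5'_not_implies_A5 by blast

end
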